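(* Suppose $H$ satisfies (B1) and (B2), and for $\alpha>0$ let $v^\alpha$ be the viscosity solution of (DP). There exists a constant $C>0$ such that for all $\alpha>0$, $$\|Dv^\alpha\|_{L^\infty(\mathbb{T}^d\times I)}+\|\Theta v^\alpha\|_{L^\infty(\mathbb{T}^d\times I)}\le C,$$ where $\Theta v(x,\xi):=\int_I k(\xi,\eta)(v(x,\xi)-v(x,\eta))\,d\eta$.
   Context: $I\subset\mathbb{R}$ finite interval, $|I|=1$; $k$ Borel measurable on $I\times I$ with $0<k_0\le k\le k_1$. $H\in C(\mathbb{T}^d\times\mathbb{R}^d)\otimes\mathcal{B}(I)$ with $H(\cdot,p,\cdot)$ bounded for each $p$. (DP): $\alpha v(x,\xi)+H(x,Dv(x,\xi),\xi)+\int_I k(\xi,\eta)(v(x,\xi)-v(x,\eta))d\eta=0$ in $\mathbb{T}^d\times I$ in the viscosity sense; it has a unique viscosity solution $v^\alpha\in C(\mathbb{T}^d)\otimes\mathcal{B}(I)$ with $|v^\alpha|\le M/\alpha$, $M:=\sup|H(\cdot,0,\cdot)|$. (B1): $C_1|p|^m-C_2\le H(x,p,\xi)$ for constants $C_1,C_2>0$, $m>1$. (B2): for each $R>0$ a modulus $\omega_R$ with $|H(x,p,\xi)-H(y,p,\xi)|\le\omega_R(|x-y|)$ for $|p|\le R$. *)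

theory Defs
  imports "HOL-Analysis.Analysis"
begin

text \<open>Functions on the torus T^d are represented as Z^d-periodic functions on real^'d.\<close>
definition periodic_Zd :: "(real^'d \<Rightarrow> 'b) \<Rightarrow> bool" where
  "periodic_Zd f \<longleftrightarrow> (\<forall>x z. (\<forall>i. z $ i \<in> \<int>) \<longrightarrow> f (x + z) = f x)"

definition C1_test :: "(real^'d \<Rightarrow> real) \<Rightarrow> (real^'d \<Rightarrow> real^'d) \<Rightarrow> bool" where
  "C1_test \<phi> D\<phi> \<longleftrightarrow> (\<forall>y. (\<phi> has_derivative (\<lambda>h. D\<phi> y \<bullet> h)) (at y)) \<and> continuous_on UNIV D\<phi>"

definition Theta :: "(real \<Rightarrow> real \<Rightarrow> real) \<Rightarrow> real set \<Rightarrow> (real^'d \<Rightarrow> real \<Rightarrow> real) \<Rightarrow> real^'d \<Rightarrow> real \<Rightarrow> real" where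
  "Theta k I v x \<xi> = (LINT \<eta>:I|lborel. k \<xi> \<eta> * (v x \<xi> - v x \<eta>))"

definition CB_class :: "real set \<Rightarrow> (real^'d \<Rightarrow> real \<Rightarrow> real) \<Rightarrow> bool" where
  "CB_class I v \<longleftrightarrow>
     (\<forall>\<xi>\<in>I. continuous_on UNIV (\<lambda>x. v x \<xi>) \<and> periodic_Zd (\<lambda>x. v x \<xi>)) \<and>
     (\<forall>x. set_borel_measurable lborel I (\<lambda>\<xi>. v x \<xi>)) \<and>
     (\<exists>B. \<forall>x. \<forall>\<xi>\<in>I. \<bar>v x \<xi>\<bar> \<le> B)"

definition DP_subsol :: "real set \<Rightarrow> (real \<Rightarrow> real \<Rightarrow> real) \<Rightarrow> (real^'d \<Rightarrow> real^'d \<Rightarrow> real \<Rightarrow> real)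
    \<Rightarrow> real \<Rightarrow> (real^'d \<Rightarrow> real \<Rightarrow> real) \<Rightarrow> bool" where
  "DP_subsol I k H \<alpha> v \<longleftrightarrow>
     (\<forall>\<xi>\<in>I. \<forall>\<phi> D\<phi> x0. C1_test \<phi> D\<phi> \<and>
        (\<exists>e>0. \<forall>y\<in>ball x0 e. v y \<xi> - \<phi> y \<le> v x0 \<xi> - \<phi> x0) \<longrightarrow>
        \<alpha> * v x0 \<xi> + H x0 (D\<phi> x0) \<xi> + Theta k I v x0 \<xi> \<le> 0)"

definition DP_supersol :: "real set \<Rightarrow> (real \<Rightarrow> real \<Rightarrow> real) \<Rightarrow> (real^'d \<Rightarrow> real^'d \<Rightarrow> real \<Rightarrow> real)
    \<Rightarrow> real \<Rightarrow> (real^'d \<Rightarrow> real \<Rightarrow> real) \<Rightarrow> bool" where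
  "DP_supersol I k H \<alpha> v \<longleftrightarrow>
     (\<forall>\<xi>\<in>I. \<forall>\<phi> D\<phi> x0. C1_test \<phi> D\<phi> \<and>
        (\<exists>e>0. \<forall>y\<in>ball x0 e. v y \<xi> - \<phi> y \<ge> v x0 \<xi> - \<phi> x0) \<longrightarrow>
        \<alpha> * v x0 \<xi> + H x0 (D\<phi> x0) \<xi> + Theta k I v x0 \<xi> \<ge> 0)"

definition DP_solution :: "real set \<Rightarrow> (real \<Rightarrow> real \<Rightarrow> real) \<Rightarrow> (real^'d \<Rightarrow> real^'d \<Rightarrow> real \<Rightarrow> real)
    \<Rightarrow> real \<Rightarrow> (real^'d \<Rightarrow> real \<Rightarrow> real) \<Rightarrow> bool" where
  "DP_solution I k H \<alpha> v \<longleftrightarrow> CB_class I v \<and> DP_subsol I k H \<alpha> v \<and> DP_supersol I k H \<alpha> v"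

end

theory Submission
  imports Defs
begin

text \<open>
  Let osc be the oscillation of v over the torus times I. Testing the equation at maximum and
  minimum points of the periodic functions v(., xi) gives |alpha v| \<le> M and |Theta v| \<le> k1 osc.
  The coercivity (B1) then bounds the gradient of any test function touching v(., xi) from above,
  so v(., xi) is Lipschitz with constant L = ((M + k1 osc + C2) / C1)^(1/m) + 1.
  Conversely, at a maximum point x0 of v(., xi) with v(x0, xi) close to sup v the equation bounds
  the average of sup v - v(x0, .) over I; comparing any minimum point with x0 through the
  Lipschitz bound on the unit cube then gives osc \<le> a + b L. Since L grows like osc^(1/m)
  with m > 1, this bounds osc, and hence L and Theta v, independently of alpha.
  Only |I| = 1, the bounds on k, (B1) and the bound on H(., 0, .) enter the estimate; the
  remaining hypotheses serve the existence of v.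
\<close>

lemma periodic_Zd_value_in_unit_cube:
  fixes f :: "real^'d \<Rightarrow> 'b"
  assumes "periodic_Zd f"
  shows "\<exists>y\<in>cbox 0 1. f y = f x"
proof -
  define z :: "real^'d" where "z = (\<chi> i. of_int \<lfloor>x $ i\<rfloor>)"
  have "f (x - z + z) = f (x - z)"
    using assms unfolding periodic_Zd_def by (metis Ints_of_int vec_lambda_beta z_def)
  moreover have "x - z \<in> cbox 0 1"
  proof -
    have "0 \<le> x $ i - of_int \<lfloor>x $ i\<rfloor> \<and> x $ i - of_int \<lfloor>x $ i\<rfloor> \<le> 1" for i
      using of_int_floor_le[of "x $ i"] real_of_int_floor_add_one_gt[of "x $ i"] by linarith
    then show ?thesis by (simp add: mem_box_cart z_def)
  qed
  ultimately show ?thesis by auto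
qed

lemma periodic_Zd_attains_sup:
  fixes f :: "real^'d \<Rightarrow> real"
  assumes "continuous_on UNIV f" "periodic_Zd f"
  obtains x0 where "x0 \<in> cbox 0 1" "\<And>x. f x \<le> f x0"
proof -
  have cont: "continuous_on (cbox 0 1) f"
    using assms(1) by (rule continuous_on_subset) simp
  have "(0::real^'d) \<in> cbox 0 1"
    by (simp add: mem_box_cart)
  then obtain x0 where x0: "x0 \<in> cbox 0 1" "\<And>y. y \<in> cbox 0 1 \<Longrightarrow> f y \<le> f x0"
    using continuous_attains_sup[OF compact_cbox _ cont] by blast
  have "f x \<le> f x0" for x
    using periodic_Zd_value_in_unit_cube[OF assms(2), of x] x0(2) by force
  with x0(1) show thesis by (rule that)
qed

lemma periodic_Zd_attains_inf:
  fixes f :: "real^'d \<Rightarrow> real"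
  assumes "continuous_on UNIV f" "periodic_Zd f"
  obtains x0 where "x0 \<in> cbox 0 1" "\<And>x. f x0 \<le> f x"
proof -
  have "continuous_on UNIV (\<lambda>x. - f x)" "periodic_Zd (\<lambda>x. - f x)"
    using assms by (auto intro: continuous_intros simp: periodic_Zd_def)
  then show thesis
    using periodic_Zd_attains_sup that by (metis neg_le_iff_le)
qed

lemma dist_le_card_unit_cube:
  fixes x y :: "real^'d"
  assumes "x \<in> cbox 0 1" "y \<in> cbox 0 1"
  shows "dist x y \<le> real CARD('d)"
proof -
  have "dist x y \<le> (\<Sum>i\<in>UNIV. \<bar>(x - y) $ i\<bar>)"
    unfolding dist_norm by (rule norm_le_l1_cart)
  also have "\<dots> \<le> (\<Sum>i\<in>(UNIV::'d set). 1)"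
  proof (intro sum_mono)
    fix i
    have "0 \<le> x $ i" "x $ i \<le> 1" "0 \<le> y $ i" "y $ i \<le> 1"
      using assms by (auto simp: mem_box_cart)
    then show "\<bar>(x - y) $ i\<bar> \<le> 1" by simp
  qed
  finally show ?thesis by simp
qed

lemma C1_test_const: "C1_test (\<lambda>_. c) (\<lambda>_. 0)"
  unfolding C1_test_def by (auto intro!: derivative_eq_intros)

lemma C1_test_smoothed_cone:
  fixes y :: "real^'d"
  assumes "0 < \<epsilon>"
  shows "C1_test (\<lambda>z. L * sqrt ((norm (z - y))\<^sup>2 + \<epsilon>\<^sup>2))
                 (\<lambda>z. (L / sqrt ((norm (z - y))\<^sup>2 + \<epsilon>\<^sup>2)) *\<^sub>R (z - y))"
proof -
  have pos: "0 < (z - y) \<bullet> (z - y) + \<epsilon>\<^sup>2" for z :: "real^'d"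
    using assms by (simp add: add_nonneg_pos)
  have "((\<lambda>z. L * sqrt ((z - y) \<bullet> (z - y) + \<epsilon>\<^sup>2)) has_derivative
          (\<lambda>h. ((L / sqrt ((z - y) \<bullet> (z - y) + \<epsilon>\<^sup>2)) *\<^sub>R (z - y)) \<bullet> h)) (at z)" for z
  proof -
    have "((\<lambda>z. L * sqrt ((z - y) \<bullet> (z - y) + \<epsilon>\<^sup>2)) has_derivative
            (\<lambda>h. L * (inverse (sqrt ((z - y) \<bullet> (z - y) + \<epsilon>\<^sup>2)) / 2 * (h \<bullet> (z - y) + (z - y) \<bullet> h)))) (at z)"
      using pos[of z] by (auto intro!: derivative_eq_intros)
    moreover have "L * (inverse s / 2 * (h \<bullet> w + w \<bullet> h)) = ((L / s) *\<^sub>R w) \<bullet> h"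
      for s and w h :: "real^'d"
    proof -
      have "L * (inverse s / 2 * (h \<bullet> w + w \<bullet> h)) = L * (inverse s * (w \<bullet> h))"
        by (simp only: inner_commute[of h w]) simp
      then show ?thesis
        by (simp only: divide_inverse inner_scaleR_left mult.assoc)
    qed
    ultimately show ?thesis
      by simp
  qed
  moreover have "continuous_on UNIV (\<lambda>z. (L / sqrt ((z - y) \<bullet> (z - y) + \<epsilon>\<^sup>2)) *\<^sub>R (z - y))"
    using pos by (auto intro!: continuous_intros simp: less_imp_neq[symmetric])
  ultimately show ?thesis
    unfolding C1_test_def power2_norm_eq_inner by blast
qed

lemma continuous_attains_global_sup:
  fixes g :: "'a::heine_borel \<Rightarrow> real"
  assumes "continuous_on UNIV g" and "\<And>z. r < dist z y \<Longrightarrow> g z \<le> g y"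
  obtains z0 where "\<And>z. g z \<le> g z0"
proof -
  have "continuous_on (cball y \<bar>r\<bar>) g"
    using assms(1) by (rule continuous_on_subset) simp
  moreover have "y \<in> cball y \<bar>r\<bar>"
    by simp
  ultimately obtain z0 where z0: "z0 \<in> cball y \<bar>r\<bar>" "\<And>z. z \<in> cball y \<bar>r\<bar> \<Longrightarrow> g z \<le> g z0"
    using continuous_attains_sup[OF compact_cball] by blast
  have "g z \<le> g z0" for z
  proof (cases "z \<in> cball y \<bar>r\<bar>")
    case False
    then have "g z \<le> g y"
      by (intro assms(2)) (auto simp: dist_commute)
    also have "g y \<le> g z0"
      by (simp add: z0(2))
    finally show ?thesis .
  qed (rule z0(2))
  then show thesis by (rule that)
qed

lemma le_mult_if_succ_mult_le_mult_sqrt: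
  fixes R n \<epsilon> :: real
  assumes "0 \<le> R" "0 \<le> n" "0 \<le> \<epsilon>" and le: "(R + 1) * n \<le> R * sqrt (n\<^sup>2 + \<epsilon>\<^sup>2)"
  shows "n \<le> R * \<epsilon>"
proof (rule power2_le_imp_le)
  have "((R + 1) * n)\<^sup>2 \<le> (R * sqrt (n\<^sup>2 + \<epsilon>\<^sup>2))\<^sup>2"
    using le assms(1,2) by (intro power_mono) auto
  then have "(R + 1)\<^sup>2 * n\<^sup>2 \<le> R\<^sup>2 * n\<^sup>2 + R\<^sup>2 * \<epsilon>\<^sup>2"
    by (simp add: power_mult_distrib distrib_left)
  moreover have "0 \<le> R * n\<^sup>2"
    using assms(1) by simp
  ultimately show "n\<^sup>2 \<le> (R * \<epsilon>)\<^sup>2"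
    by (simp add: power2_eq_square power_mult_distrib algebra_simps)
qed (use assms in simp)

definition viscosity_gradient_le :: "(real^'d \<Rightarrow> real) \<Rightarrow> real \<Rightarrow> bool" where
  "viscosity_gradient_le u R \<longleftrightarrow>
     (\<forall>\<phi> D\<phi> x0. C1_test \<phi> D\<phi> \<and> (\<forall>y. u y - \<phi> y \<le> u x0 - \<phi> x0) \<longrightarrow> norm (D\<phi> x0) \<le> R)"

lemma touching_point_near:
  fixes u :: "real^'d \<Rightarrow> real"
  assumes cont: "continuous_on UNIV u" and bdd: "\<And>x. \<bar>u x\<bar> \<le> B"
    and grad: "viscosity_gradient_le u R"
    and "0 \<le> R" "0 < \<epsilon>"
  obtains z where "dist z y \<le> R * \<epsilon>" "u x \<le> u z + (R + 1) * dist x y"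
proof -
  txt \<open>The smoothed cone L q with q(z) = sqrt(|z - y|^2 + eps^2) touches u from above at some z0;
    its gradient there has norm at most R only if z0 lies within R eps of y.\<close>
  define L where "L = R + 1"
  have L: "0 < L"
    using \<open>0 \<le> R\<close> by (simp add: L_def)
  define q where "q z = sqrt ((dist z y)\<^sup>2 + \<epsilon>\<^sup>2)" for z
  have q_ge: "dist z y \<le> q z" and q_ge_eps: "\<epsilon> \<le> q z" and q_le: "q z \<le> dist z y + \<epsilon>" for z
    using sqrt_add_le_add_sqrt[of "(dist z y)\<^sup>2" "\<epsilon>\<^sup>2"] real_sqrt_ge_abs2[of \<epsilon> "dist z y"] \<open>0 < \<epsilon>\<close>
    by (auto simp: q_def)
  have q_pos: "0 < q z" for z
    using q_ge_eps[of z] \<open>0 < \<epsilon>\<close> by linarith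
  have q_y: "q y = \<epsilon>"
    using \<open>0 < \<epsilon>\<close> by (simp add: q_def)
  have C1: "C1_test (\<lambda>z. L * q z) (\<lambda>z. (L / q z) *\<^sub>R (z - y))"
    using C1_test_smoothed_cone[OF \<open>0 < \<epsilon>\<close>, of L y] by (simp add: q_def dist_norm)
  have "continuous_on UNIV (\<lambda>z. u z - L * q z)"
    unfolding q_def by (intro continuous_intros cont)
  moreover have "u z - L * q z \<le> u y - L * q y" if "(2 * B + L * \<epsilon>) / L < dist z y" for z
  proof -
    have "2 * B + L * \<epsilon> < L * dist z y"
      using that L by (simp add: field_simps)
    moreover have "L * dist z y \<le> L * q z"
      using q_ge L by (simp add: mult_left_mono)
    ultimately show ?thesis
      using bdd[of z] bdd[of y] q_y by (simp add: abs_le_iff)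
  qed
  ultimately obtain z0 where z0: "\<And>z. u z - L * q z \<le> u z0 - L * q z0"
    using continuous_attains_global_sup[of "\<lambda>z. u z - L * q z"] by blast
  have "norm ((L / q z0) *\<^sub>R (z0 - y)) \<le> R"
    using grad C1 z0 unfolding viscosity_gradient_le_def by blast
  then have "L / q z0 * dist z0 y \<le> R"
    unfolding norm_scaleR dist_norm using q_pos[of z0] L by simp
  then have "L * dist z0 y \<le> R * q z0"
    using q_pos[of z0] by (simp add: field_simps)
  then have "(R + 1) * dist z0 y \<le> R * sqrt ((dist z0 y)\<^sup>2 + \<epsilon>\<^sup>2)"
    by (simp only: L_def q_def)
  then have "dist z0 y \<le> R * \<epsilon>"
    by (rule le_mult_if_succ_mult_le_mult_sqrt[OF \<open>0 \<le> R\<close> zero_le_dist less_imp_le[OF \<open>0 < \<epsilon>\<close>]])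
  moreover have "u x \<le> u z0 + L * dist x y"
  proof -
    have "L * q x \<le> L * dist x y + L * \<epsilon>" and "L * \<epsilon> \<le> L * q z0"
      using mult_left_mono[OF q_le[of x], of L] mult_left_mono[OF q_ge_eps[of z0], of L] L
      by (simp_all add: distrib_left)
    then show ?thesis
      using z0[of x] by linarith
  qed
  ultimately show thesis
    using that by (simp add: L_def)
qed

lemma lipschitz_on_if_test_gradients_bounded:
  fixes u :: "real^'d \<Rightarrow> real"
  assumes cont: "continuous_on UNIV u" and bdd: "\<And>x. \<bar>u x\<bar> \<le> B"
    and grad: "viscosity_gradient_le u R"
    and "0 \<le> R"
  shows "(R + 1)-lipschitz_on UNIV u"
proof -
  have one_sided: "u x \<le> u y + (R + 1) * dist x y" for x y
  proof (rule field_le_epsilon)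
    fix \<delta> :: real
    assume "0 < \<delta>"
    then obtain \<rho> where "0 < \<rho>" and \<rho>: "\<And>z. dist z y < \<rho> \<Longrightarrow> dist (u z) (u y) < \<delta>"
      using cont unfolding continuous_on_eq_continuous_at[OF open_UNIV] continuous_at_eps_delta by blast
    have \<epsilon>: "0 < \<rho> / (R + 1)" and "R * (\<rho> / (R + 1)) < \<rho>"
      using \<open>0 < \<rho>\<close> \<open>0 \<le> R\<close> by (auto simp: field_simps)
    obtain z where "dist z y \<le> R * (\<rho> / (R + 1))" and touch: "u x \<le> u z + (R + 1) * dist x y"
      using touching_point_near[OF cont bdd grad \<open>0 \<le> R\<close> \<epsilon>] .
    with \<open>R * (\<rho> / (R + 1)) < \<rho>\<close> have "dist (u z) (u y) < \<delta>"
      by (intro \<rho>) linarith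
    with touch show "u x \<le> u y + (R + 1) * dist x y + \<delta>"
      by (simp add: dist_real_def)
  qed
  show ?thesis
  proof (rule lipschitz_onI)
    show "dist (u x) (u y) \<le> (R + 1) * dist x y" for x y
      using one_sided[of x y] one_sided[of y x] by (auto simp: dist_real_def dist_commute)
  qed (use \<open>0 \<le> R\<close> in simp)
qed

lemma le_if_le_add_mult_pos:
  fixes x y c :: real
  assumes "0 < c" and "\<And>\<epsilon>. 0 < \<epsilon> \<Longrightarrow> x \<le> y + c * \<epsilon>"
  shows "x \<le> y"
proof (rule field_le_epsilon)
  fix e :: real
  assume "0 < e"
  then show "x \<le> y + e"
    using assms(1) assms(2)[of "e / c"] by simp
qed

lemma le_max_if_le_add_mult_powr:
  fixes Y A B m :: real
  assumes "1 < m" "0 \<le> A" "0 \<le> B" "Y \<le> A + B * Y powr (1 / m)"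
  shows "Y \<le> max 1 ((A + B) powr (m / (m - 1)))"
proof (cases "Y \<le> 1")
  case False
  then have Y: "1 < Y" by simp
  have Y_root: "1 \<le> Y powr (1 / m)"
    using Y assms(1) by (intro ge_one_powr_ge_zero) auto
  have "Y powr (1 / m) * Y powr (1 - 1 / m) = Y"
    using Y by (simp flip: powr_add)
  also have "\<dots> \<le> A + B * Y powr (1 / m)"
    by (fact assms(4))
  also have "\<dots> \<le> Y powr (1 / m) * (A + B)"
    using mult_left_mono[OF Y_root assms(2)] by (simp add: algebra_simps)
  finally have "Y powr (1 - 1 / m) \<le> A + B"
    using Y_root by (subst (asm) mult_le_cancel_left_pos) auto
  have "Y = (Y powr (1 - 1 / m)) powr (m / (m - 1))"
    using Y assms(1) by (simp add: powr_powr field_simps)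
  moreover have "(Y powr (1 - 1 / m)) powr (m / (m - 1)) \<le> (A + B) powr (m / (m - 1))"
    using \<open>Y powr (1 - 1 / m) \<le> A + B\<close> assms(1) by (intro powr_mono2) auto
  ultimately have "Y \<le> (A + B) powr (m / (m - 1))"
    by simp
  then show ?thesis by simp
qed simp

lemma bounded_if_le_add_mult_powr:
  fixes a b c d m :: real
  assumes "1 < m" "0 \<le> a" "0 \<le> b" "0 \<le> c" "0 \<le> d"
  obtains K where "\<And>T. 0 \<le> T \<Longrightarrow> T \<le> a + b * (c + d * T) powr (1 / m) \<Longrightarrow> T \<le> K"
proof
  define Ymax where "Ymax = max 1 ((c + d * a + d * b) powr (m / (m - 1)))"
  fix T :: real
  assume "0 \<le> T" and T: "T \<le> a + b * (c + d * T) powr (1 / m)"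
  have "c + d * T \<le> (c + d * a) + (d * b) * (c + d * T) powr (1 / m)"
    using mult_left_mono[OF T assms(5)] by (simp add: algebra_simps)
  then have "c + d * T \<le> Ymax"
    unfolding Ymax_def using assms by (intro le_max_if_le_add_mult_powr) auto
  then have "(c + d * T) powr (1 / m) \<le> Ymax powr (1 / m)"
    using \<open>0 \<le> T\<close> assms by (intro powr_mono2) auto
  then show "T \<le> a + b * Ymax powr (1 / m)"
    using T mult_left_mono[OF _ assms(3)] by fastforce
qed

lemma set_borel_measurable_section:
  fixes f :: "real \<Rightarrow> real \<Rightarrow> real"
  assumes "set_borel_measurable lborel (A \<times> B) (\<lambda>(x, y). f x y)" and "x \<in> A"
  shows "set_borel_measurable lborel B (f x)"
proof -
  have "(\<lambda>y::real. (x, y)) \<in> measurable lborel lborel"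
    by (auto intro!: borel_measurable_continuous_onI continuous_intros simp: measurable_lborel2)
  from measurable_compose[OF this assms(1)[unfolded set_borel_measurable_def]]
  have "(\<lambda>y. indicator (A \<times> B) (x, y) *\<^sub>R f x y) \<in> borel_measurable lborel"
    by simp
  moreover have "(\<lambda>y. indicator (A \<times> B) (x, y) *\<^sub>R f x y) = (\<lambda>y. indicator B y *\<^sub>R f x y)"
    using assms(2) by (auto simp: indicator_def)
  ultimately show ?thesis
    unfolding set_borel_measurable_def by simp
qed

lemma set_integral_eq_integral_restrict_space:
  fixes f :: "'a \<Rightarrow> 'b::{banach, second_countable_topology}"
  assumes "A \<in> sets M"
  shows "(LINT x:A|M. f x) = integral\<^sup>L (restrict_space M A) f"
  unfolding set_lebesgue_integral_def
  by (rule integral_restrict_space[symmetric]) (simp add: assms sets.Int_space_eq2)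

lemma finite_measure_restrict_space_measure_1:
  assumes "measure M A = 1"
  shows "A \<in> sets M" "finite_measure (restrict_space M A)" "measure (restrict_space M A) A = 1"
proof -
  show A: "A \<in> sets M"
    using assms measure_notin_sets by fastforce
  have "emeasure M A \<noteq> \<infinity>"
    using assms by (auto simp: measure_def)
  then show "finite_measure (restrict_space M A)"
    using A by (intro finite_measureI) (simp add: emeasure_restrict_space space_restrict_space)
  show "measure (restrict_space M A) A = 1"
    using A assms by (simp add: measure_restrict_space)
qed

locale dp_data =
  fixes I :: "real set" and k :: "real \<Rightarrow> real \<Rightarrow> real"
    and H :: "real^'d \<Rightarrow> real^'d \<Rightarrow> real \<Rightarrow> real"
    and k0 k1 C1 C2 m M0 :: real
  assumes I_measure: "measure lborel I = 1"
    and k_section_measurable: "\<And>\<xi>. \<xi> \<in> I \<Longrightarrow> set_borel_measurable lborel I (k \<xi>)"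
    and k0_pos: "0 < k0"
    and k_bounds: "\<And>\<xi> \<eta>. \<xi> \<in> I \<Longrightarrow> \<eta> \<in> I \<Longrightarrow> k0 \<le> k \<xi> \<eta> \<and> k \<xi> \<eta> \<le> k1"
    and H0_bound: "\<And>x \<xi>. \<xi> \<in> I \<Longrightarrow> \<bar>H x 0 \<xi>\<bar> \<le> M0"
    and C1_pos: "0 < C1" and C2_pos: "0 < C2" and m_gt_1: "1 < m"
    and H_coercive: "\<And>x p \<xi>. \<xi> \<in> I \<Longrightarrow> C1 * norm p powr m - C2 \<le> H x p \<xi>"
begin

definition measure_I :: "real measure" where
  "measure_I = restrict_space lborel I"

lemma I_sets: "I \<in> sets lborel"
  and finite_measure_I: "finite_measure measure_I"
  and space_measure_I: "space measure_I = I"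
  and measure_I_space: "measure measure_I (space measure_I) = 1"
  using finite_measure_restrict_space_measure_1[OF I_measure]
  by (simp_all add: measure_I_def space_restrict_space)

lemma I_nonempty: "I \<noteq> {}"
  using I_measure by auto

lemma M0_nonneg: "0 \<le> M0"
  using H0_bound I_nonempty by (meson abs_ge_zero all_not_in_conv order_trans)

lemma k1_pos: "0 < k1"
  using k_bounds k0_pos I_nonempty by (meson all_not_in_conv order_less_le_trans order_trans)

lemma borel_measurable_measure_I_iff:
  "f \<in> borel_measurable measure_I \<longleftrightarrow> set_borel_measurable lborel I f"
  for f :: "real \<Rightarrow> real"
  unfolding set_borel_measurable_def measure_I_def
  by (rule borel_measurable_restrict_space_iff) (use I_sets in simp)

lemma coupling_le:
  assumes "\<xi> \<in> I" "\<eta> \<in> I" "d \<le> t" "0 \<le> t"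
  shows "k \<xi> \<eta> * d \<le> k1 * t"
proof -
  have "k \<xi> \<eta> * d \<le> k \<xi> \<eta> * t"
    using k_bounds[OF assms(1,2)] k0_pos assms(3) by (simp add: mult_left_mono)
  also have "\<dots> \<le> k1 * t"
    using k_bounds[OF assms(1,2)] assms(4) by (simp add: mult_right_mono)
  finally show ?thesis .
qed

lemma coupling_ge: "\<xi> \<in> I \<Longrightarrow> \<eta> \<in> I \<Longrightarrow> - t \<le> d \<Longrightarrow> 0 \<le> t \<Longrightarrow> - (k1 * t) \<le> k \<xi> \<eta> * d"
  using coupling_le[of \<xi> \<eta> "- d" t] by simp

lemma coupling_ge_affine:
  assumes "\<xi> \<in> I" "\<eta> \<in> I" "0 \<le> g" "0 \<le> e" "e \<le> 1"
  shows "k0 * g - k1 \<le> k \<xi> \<eta> * (g - e)"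
proof -
  have "k0 * g \<le> k \<xi> \<eta> * g"
    using k_bounds[OF assms(1,2)] assms(3) by (simp add: mult_right_mono)
  moreover have "k \<xi> \<eta> * e \<le> k1 * 1"
    using k_bounds[OF assms(1,2)] k0_pos assms(4,5) by (intro mult_mono) auto
  ultimately show ?thesis
    by (simp add: right_diff_distrib)
qed

lemma coupling_le_affine:
  assumes "\<xi> \<in> I" "\<eta> \<in> I" "0 \<le> w" "0 \<le> h" "d \<le> h - w"
  shows "k \<xi> \<eta> * d \<le> k1 * h - k0 * w"
proof -
  have "k \<xi> \<eta> * d \<le> k \<xi> \<eta> * h - k \<xi> \<eta> * w"
    using k_bounds[OF assms(1,2)] k0_pos assms(5) mult_left_mono[OF assms(5), of "k \<xi> \<eta>"]
    by (simp add: right_diff_distrib)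
  moreover have "k \<xi> \<eta> * h \<le> k1 * h" and "k0 * w \<le> k \<xi> \<eta> * w"
    using k_bounds[OF assms(1,2)] assms(3,4) by (simp_all add: mult_right_mono)
  ultimately show ?thesis
    by linarith
qed

lemma k_measurable: "\<xi> \<in> I \<Longrightarrow> k \<xi> \<in> borel_measurable measure_I"
  using k_section_measurable by (simp add: borel_measurable_measure_I_iff)

lemma Theta_eq_integral:
  "Theta k I v x \<xi> = (\<integral>\<eta>. k \<xi> \<eta> * (v x \<xi> - v x \<eta>) \<partial>measure_I)"
  unfolding Theta_def measure_I_def by (rule set_integral_eq_integral_restrict_space[OF I_sets])

lemma integrable_measure_I:
  fixes f :: "real \<Rightarrow> real"
  assumes "f \<in> borel_measurable measure_I" and "\<And>\<eta>. \<eta> \<in> I \<Longrightarrow> \<bar>f \<eta>\<bar> \<le> B"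
  shows "integrable measure_I f"
  using assms by (intro finite_measure.integrable_const_bound[OF finite_measure_I, where B = B])
    (auto simp: space_measure_I)

lemma integral_affine_measure_I:
  fixes g :: "real \<Rightarrow> real"
  assumes "integrable measure_I g"
  shows "(\<integral>\<eta>. a * g \<eta> + b \<partial>measure_I) = a * (\<integral>\<eta>. g \<eta> \<partial>measure_I) + b"
  using assms finite_measure.integrable_const[OF finite_measure_I, of b]
  by (subst Bochner_Integration.integral_add) (auto simp: measure_I_space)

definition grad_bound :: "real \<Rightarrow> real" where
  "grad_bound T = ((M0 + k1 * T + C2) / C1) powr (1 / m)"

definition deficit_bound :: real where
  "deficit_bound = (2 * M0 + k1) / k0"

text \<open>D bounds distances in the unit cube and L is a Lipschitz constant of the v(., xi).\<close>

definition osc_bound :: "real \<Rightarrow> real \<Rightarrow> real" where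
  "osc_bound D L = (2 * M0 + k1 * deficit_bound + k1 * L * D) / k0"

lemma grad_bound_mono: "0 \<le> S \<Longrightarrow> S \<le> T \<Longrightarrow> grad_bound S \<le> grad_bound T"
  unfolding grad_bound_def using M0_nonneg k1_pos C1_pos C2_pos m_gt_1
  by (intro powr_mono2 divide_right_mono) auto

lemma uniform_bound:
  obtains C where "0 < C"
    and "\<And>T. 0 \<le> T \<Longrightarrow> T \<le> osc_bound (real CARD('d)) (grad_bound T + 1) \<Longrightarrow>
           grad_bound T + 1 \<le> C \<and> k1 * T \<le> C"
proof -
  define D where "D = real CARD('d)"
  define a where "a = (2 * M0 + k1 * deficit_bound + k1 * D) / k0"
  define b where "b = k1 * D / k0"
  have "0 \<le> deficit_bound"
    unfolding deficit_bound_def using M0_nonneg k1_pos k0_pos by simp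
  then have "0 \<le> a" "0 \<le> b"
    unfolding a_def b_def D_def using M0_nonneg k1_pos k0_pos by auto
  then obtain K where K: "\<And>T. 0 \<le> T \<Longrightarrow> T \<le> a + b * ((M0 + C2) / C1 + k1 / C1 * T) powr (1 / m) \<Longrightarrow> T \<le> K"
    using bounded_if_le_add_mult_powr[OF m_gt_1, of a b "(M0 + C2) / C1" "k1 / C1"]
      M0_nonneg C1_pos C2_pos k1_pos by auto
  have "osc_bound D (g + 1) = a + b * g" for g
    unfolding osc_bound_def a_def b_def using k0_pos by (simp add: field_simps)
  moreover have "(M0 + k1 * T + C2) / C1 = (M0 + C2) / C1 + k1 / C1 * T" for T
    using C1_pos by (simp add: field_simps)
  ultimately have osc_bound_eq:
    "osc_bound D (grad_bound T + 1) = a + b * ((M0 + C2) / C1 + k1 / C1 * T) powr (1 / m)" for T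
    by (simp add: grad_bound_def)
  show thesis
  proof
    show "0 < max (grad_bound K + 1) (k1 * K)"
      by (simp add: grad_bound_def max.strict_coboundedI1 add_nonneg_pos)
    fix T :: real
    assume "0 \<le> T" "T \<le> osc_bound (real CARD('d)) (grad_bound T + 1)"
    then have "T \<le> K"
      using K osc_bound_eq by (simp add: D_def)
    then show "grad_bound T + 1 \<le> max (grad_bound K + 1) (k1 * K) \<and> k1 * T \<le> max (grad_bound K + 1) (k1 * K)"
      using grad_bound_mono[OF \<open>0 \<le> T\<close>] mult_left_mono[OF _ less_imp_le[OF k1_pos]]
      by (auto simp: le_max_iff_disj)
  qed
qed

end

locale dp_solution = dp_data I k H k0 k1 C1 C2 m M0
  for I k H k0 k1 C1 C2 m M0 +
  fixes \<alpha> :: real and v :: "real^'d \<Rightarrow> real \<Rightarrow> real"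
  assumes \<alpha>_pos: "0 < \<alpha>" and solution: "DP_solution I k H \<alpha> v"
begin

lemma v_continuous: "\<xi> \<in> I \<Longrightarrow> continuous_on UNIV (\<lambda>x. v x \<xi>)"
  and v_periodic: "\<xi> \<in> I \<Longrightarrow> periodic_Zd (\<lambda>x. v x \<xi>)"
  and v_measurable: "v x \<in> borel_measurable measure_I"
  using solution by (auto simp: DP_solution_def CB_class_def borel_measurable_measure_I_iff)

lemma v_bounded:
  obtains B where "\<And>x \<xi>. \<xi> \<in> I \<Longrightarrow> \<bar>v x \<xi>\<bar> \<le> B"
proof -
  from solution obtain B where "\<forall>x. \<forall>\<xi>\<in>I. \<bar>v x \<xi>\<bar> \<le> B"
    unfolding DP_solution_def CB_class_def by blast
  then show thesis
    using that by blast
qed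

lemma v_attains_max:
  assumes "\<xi> \<in> I"
  obtains x0 where "x0 \<in> cbox 0 1" "\<And>y. v y \<xi> \<le> v x0 \<xi>"
  using periodic_Zd_attains_sup[OF v_continuous[OF assms] v_periodic[OF assms]] by blast

lemma v_attains_min:
  assumes "\<xi> \<in> I"
  obtains x0 where "x0 \<in> cbox 0 1" "\<And>y. v x0 \<xi> \<le> v y \<xi>"
  using periodic_Zd_attains_inf[OF v_continuous[OF assms] v_periodic[OF assms]] by blast

lemma subsolution_at_max:
  assumes "\<xi> \<in> I" "C1_test \<phi> D\<phi>" "\<And>y. v y \<xi> - \<phi> y \<le> v x0 \<xi> - \<phi> x0"
  shows "\<alpha> * v x0 \<xi> + H x0 (D\<phi> x0) \<xi> + Theta k I v x0 \<xi> \<le> 0"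
proof -
  have "DP_subsol I k H \<alpha> v"
    using solution by (simp add: DP_solution_def)
  moreover have "\<exists>e>0. \<forall>y\<in>ball x0 e. v y \<xi> - \<phi> y \<le> v x0 \<xi> - \<phi> x0"
    using assms(3) by (intro exI[of _ 1]) simp
  ultimately show ?thesis
    using assms(1,2) unfolding DP_subsol_def by blast
qed

lemma equation_le_at_max:
  assumes "\<xi> \<in> I" "\<And>y. v y \<xi> \<le> v x0 \<xi>"
  shows "\<alpha> * v x0 \<xi> + H x0 0 \<xi> + Theta k I v x0 \<xi> \<le> 0"
  using subsolution_at_max[OF assms(1) C1_test_const] assms(2) by simp

lemma supersolution_at_min:
  assumes "\<xi> \<in> I" "C1_test \<phi> D\<phi>" "\<And>y. v x0 \<xi> - \<phi> x0 \<le> v y \<xi> - \<phi> y"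
  shows "0 \<le> \<alpha> * v x0 \<xi> + H x0 (D\<phi> x0) \<xi> + Theta k I v x0 \<xi>"
proof -
  have "DP_supersol I k H \<alpha> v"
    using solution by (simp add: DP_solution_def)
  moreover have "\<exists>e>0. \<forall>y\<in>ball x0 e. v x0 \<xi> - \<phi> x0 \<le> v y \<xi> - \<phi> y"
    using assms(3) by (intro exI[of _ 1]) simp
  ultimately show ?thesis
    using assms(1,2) unfolding DP_supersol_def by blast
qed

lemma equation_ge_at_min:
  assumes "\<xi> \<in> I" "\<And>y. v x0 \<xi> \<le> v y \<xi>"
  shows "0 \<le> \<alpha> * v x0 \<xi> + H x0 0 \<xi> + Theta k I v x0 \<xi>"
  using supersolution_at_min[OF assms(1) C1_test_const] assms(2) by simp

lemma integrable_v: "integrable measure_I (\<lambda>\<eta>. c - v x \<eta>)"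
  and integrable_coupling: "\<xi> \<in> I \<Longrightarrow> integrable measure_I (\<lambda>\<eta>. k \<xi> \<eta> * (c - v x \<eta>))"
proof -
  obtain B where B: "\<And>x \<xi>. \<xi> \<in> I \<Longrightarrow> \<bar>v x \<xi>\<bar> \<le> B"
    using v_bounded by blast
  have bound: "\<bar>c - v x \<eta>\<bar> \<le> \<bar>c\<bar> + B" if "\<eta> \<in> I" for \<eta>
    using B[OF that, of x] by linarith
  then show "integrable measure_I (\<lambda>\<eta>. c - v x \<eta>)"
    using v_measurable by (intro integrable_measure_I) auto
  assume "\<xi> \<in> I"
  have "\<bar>k \<xi> \<eta> * (c - v x \<eta>)\<bar> \<le> k1 * (\<bar>c\<bar> + B)" if "\<eta> \<in> I" for \<eta>
    using k_bounds[OF \<open>\<xi> \<in> I\<close> that] k0_pos bound[OF that]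
    unfolding abs_mult by (intro mult_mono) auto
  then show "integrable measure_I (\<lambda>\<eta>. k \<xi> \<eta> * (c - v x \<eta>))"
    using v_measurable k_measurable[OF \<open>\<xi> \<in> I\<close>] by (intro integrable_measure_I) auto
qed

lemma Theta_ge_affine:
  assumes "\<xi> \<in> I" and "\<And>\<eta>. \<eta> \<in> I \<Longrightarrow> a * (c - v y \<eta>) + b \<le> k \<xi> \<eta> * (v x \<xi> - v x \<eta>)"
  shows "a * (\<integral>\<eta>. c - v y \<eta> \<partial>measure_I) + b \<le> Theta k I v x \<xi>"
  unfolding Theta_eq_integral integral_affine_measure_I[OF integrable_v, symmetric]
  using assms integrable_v integrable_coupling[OF assms(1)]
  by (intro integral_mono Bochner_Integration.integrable_add integrable_mult_right
      finite_measure.integrable_const[OF finite_measure_I]) (auto simp: space_measure_I)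

lemma Theta_le_affine:
  assumes "\<xi> \<in> I" and "\<And>\<eta>. \<eta> \<in> I \<Longrightarrow> k \<xi> \<eta> * (v x \<xi> - v x \<eta>) \<le> a * (c - v y \<eta>) + b"
  shows "Theta k I v x \<xi> \<le> a * (\<integral>\<eta>. c - v y \<eta> \<partial>measure_I) + b"
  unfolding Theta_eq_integral integral_affine_measure_I[OF integrable_v, symmetric]
  using assms integrable_v integrable_coupling[OF assms(1)]
  by (intro integral_mono Bochner_Integration.integrable_add integrable_mult_right
      finite_measure.integrable_const[OF finite_measure_I]) (auto simp: space_measure_I)

lemma Theta_ge_const:
  "\<xi> \<in> I \<Longrightarrow> (\<And>\<eta>. \<eta> \<in> I \<Longrightarrow> b \<le> k \<xi> \<eta> * (v x \<xi> - v x \<eta>)) \<Longrightarrow> b \<le> Theta k I v x \<xi>"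
  using Theta_ge_affine[where a = 0] by simp

lemma Theta_le_const:
  "\<xi> \<in> I \<Longrightarrow> (\<And>\<eta>. \<eta> \<in> I \<Longrightarrow> k \<xi> \<eta> * (v x \<xi> - v x \<eta>) \<le> b) \<Longrightarrow> Theta k I v x \<xi> \<le> b"
  using Theta_le_affine[where a = 0] by simp

definition vsup :: real where
  "vsup = Sup ((\<lambda>(x, \<xi>). v x \<xi>) ` (UNIV \<times> I))"

definition vinf :: real where
  "vinf = Inf ((\<lambda>(x, \<xi>). v x \<xi>) ` (UNIV \<times> I))"

lemma values_v_nonempty: "(\<lambda>(x, \<xi>). v x \<xi>) ` (UNIV \<times> I) \<noteq> {}"
  using I_nonempty by auto

lemma values_v_bdd: "bdd_above ((\<lambda>(x, \<xi>). v x \<xi>) ` (UNIV \<times> I))"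
  "bdd_below ((\<lambda>(x, \<xi>). v x \<xi>) ` (UNIV \<times> I))"
proof -
  obtain B where B: "\<And>x \<xi>. \<xi> \<in> I \<Longrightarrow> \<bar>v x \<xi>\<bar> \<le> B"
    using v_bounded by blast
  show "bdd_above ((\<lambda>(x, \<xi>). v x \<xi>) ` (UNIV \<times> I))"
    using B by (intro bdd_aboveI[of _ B]) (auto simp: abs_le_iff)
  show "bdd_below ((\<lambda>(x, \<xi>). v x \<xi>) ` (UNIV \<times> I))"
    using B by (intro bdd_belowI[of _ "- B"]) (auto simp: abs_le_iff minus_le_iff)
qed

lemma v_le_vsup: "\<xi> \<in> I \<Longrightarrow> v x \<xi> \<le> vsup"
  unfolding vsup_def by (rule cSup_upper[OF _ values_v_bdd(1)]) auto

lemma vinf_le_v: "\<xi> \<in> I \<Longrightarrow> vinf \<le> v x \<xi>"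
  unfolding vinf_def by (rule cInf_lower[OF _ values_v_bdd(2)]) auto

lemma vsup_approx:
  assumes "0 < \<epsilon>"
  obtains x \<xi> where "\<xi> \<in> I" "vsup - \<epsilon> < v x \<xi>"
  using less_cSup_iff[OF values_v_nonempty values_v_bdd(1), of "vsup - \<epsilon>"] assms
  unfolding vsup_def by auto

lemma vinf_approx:
  assumes "0 < \<epsilon>"
  obtains x \<xi> where "\<xi> \<in> I" "v x \<xi> < vinf + \<epsilon>"
  using cInf_less_iff[OF values_v_nonempty values_v_bdd(2), of "vinf + \<epsilon>"] assms
  unfolding vinf_def by auto

lemma alpha_vsup_le: "\<alpha> * vsup \<le> M0"
proof (rule le_if_le_add_mult_pos)
  show "0 < \<alpha> + k1"
    using \<alpha>_pos k1_pos by simp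
  fix \<epsilon> :: real
  assume "0 < \<epsilon>"
  obtain x \<xi> where "\<xi> \<in> I" and near: "vsup - \<epsilon> < v x \<xi>"
    using vsup_approx[OF \<open>0 < \<epsilon>\<close>] .
  obtain x0 where max: "\<And>y. v y \<xi> \<le> v x0 \<xi>"
    using v_attains_max[OF \<open>\<xi> \<in> I\<close>] by blast
  have "- (k1 * \<epsilon>) \<le> Theta k I v x0 \<xi>"
  proof (rule Theta_ge_const[OF \<open>\<xi> \<in> I\<close>])
    fix \<eta> assume "\<eta> \<in> I"
    then have "- \<epsilon> \<le> v x0 \<xi> - v x0 \<eta>"
      using near max[of x] v_le_vsup[of \<eta> x0] by linarith
    then show "- (k1 * \<epsilon>) \<le> k \<xi> \<eta> * (v x0 \<xi> - v x0 \<eta>)"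
      using coupling_ge \<open>\<xi> \<in> I\<close> \<open>\<eta> \<in> I\<close> \<open>0 < \<epsilon>\<close> by simp
  qed
  moreover have "\<alpha> * (vsup - \<epsilon>) \<le> \<alpha> * v x0 \<xi>"
    using near max[of x] \<alpha>_pos by (intro mult_left_mono) auto
  ultimately show "\<alpha> * vsup \<le> M0 + (\<alpha> + k1) * \<epsilon>"
    using equation_le_at_max[OF \<open>\<xi> \<in> I\<close> max] H0_bound[OF \<open>\<xi> \<in> I\<close>, of x0]
    by (simp add: algebra_simps abs_le_iff)
qed

lemma alpha_vinf_ge: "- M0 \<le> \<alpha> * vinf"
proof (rule le_if_le_add_mult_pos)
  show "0 < \<alpha> + k1"
    using \<alpha>_pos k1_pos by simp
  fix \<epsilon> :: real
  assume "0 < \<epsilon>"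
  obtain x \<xi> where "\<xi> \<in> I" and near: "v x \<xi> < vinf + \<epsilon>"
    using vinf_approx[OF \<open>0 < \<epsilon>\<close>] .
  obtain x0 where min: "\<And>y. v x0 \<xi> \<le> v y \<xi>"
    using v_attains_min[OF \<open>\<xi> \<in> I\<close>] by blast
  have "Theta k I v x0 \<xi> \<le> k1 * \<epsilon>"
  proof (rule Theta_le_const[OF \<open>\<xi> \<in> I\<close>])
    fix \<eta> assume "\<eta> \<in> I"
    then have "v x0 \<xi> - v x0 \<eta> \<le> \<epsilon>"
      using near min[of x] vinf_le_v[of \<eta> x0] by linarith
    then show "k \<xi> \<eta> * (v x0 \<xi> - v x0 \<eta>) \<le> k1 * \<epsilon>"
      using coupling_le \<open>\<xi> \<in> I\<close> \<open>\<eta> \<in> I\<close> \<open>0 < \<epsilon>\<close> by simp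
  qed
  moreover have "\<alpha> * v x0 \<xi> \<le> \<alpha> * (vinf + \<epsilon>)"
    using near min[of x] \<alpha>_pos by (intro mult_left_mono) auto
  ultimately show "- M0 \<le> \<alpha> * vinf + (\<alpha> + k1) * \<epsilon>"
    using equation_ge_at_min[OF \<open>\<xi> \<in> I\<close> min] H0_bound[OF \<open>\<xi> \<in> I\<close>, of x0]
    by (simp add: algebra_simps abs_le_iff)
qed

lemma abs_alpha_v_le:
  assumes "\<xi> \<in> I"
  shows "\<bar>\<alpha> * v x \<xi>\<bar> \<le> M0"
proof -
  have "\<alpha> * v x \<xi> \<le> \<alpha> * vsup" and "\<alpha> * vinf \<le> \<alpha> * v x \<xi>"
    using v_le_vsup[OF assms] vinf_le_v[OF assms] \<alpha>_pos by (simp_all add: mult_left_mono)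
  then show ?thesis
    using alpha_vsup_le alpha_vinf_ge by linarith
qed

definition osc :: real where
  "osc = vsup - vinf"

lemma osc_nonneg: "0 \<le> osc"
  using I_nonempty v_le_vsup vinf_le_v unfolding osc_def
  by (meson diff_ge_0_iff_ge ex_in_conv order_trans)

lemma abs_Theta_le:
  assumes "\<xi> \<in> I"
  shows "\<bar>Theta k I v x \<xi>\<bar> \<le> k1 * osc"
proof -
  have "- osc \<le> v x \<xi> - v x \<eta>" and "v x \<xi> - v x \<eta> \<le> osc" if "\<eta> \<in> I" for \<eta>
    using v_le_vsup[OF that, of x] vinf_le_v[OF that, of x] v_le_vsup[OF assms, of x]
      vinf_le_v[OF assms, of x]
    unfolding osc_def by linarith+
  then have "- (k1 * osc) \<le> Theta k I v x \<xi>" and "Theta k I v x \<xi> \<le> k1 * osc"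
    using assms osc_nonneg
    by (auto intro!: Theta_ge_const Theta_le_const coupling_ge coupling_le)
  then show ?thesis
    by (simp add: abs_le_iff)
qed

lemma viscosity_gradient_le_v:
  assumes "\<xi> \<in> I"
  shows "viscosity_gradient_le (\<lambda>x. v x \<xi>) (grad_bound osc)"
  unfolding viscosity_gradient_le_def
proof (intro allI impI, elim conjE)
  fix \<phi> D\<phi> x0
  assume "C1_test \<phi> D\<phi>" and "\<forall>y. v y \<xi> - \<phi> y \<le> v x0 \<xi> - \<phi> x0"
  then have "\<alpha> * v x0 \<xi> + H x0 (D\<phi> x0) \<xi> + Theta k I v x0 \<xi> \<le> 0"
    using subsolution_at_max[OF assms] by blast
  then have "C1 * norm (D\<phi> x0) powr m \<le> M0 + k1 * osc + C2"
    using H_coercive[where x = x0 and p = "D\<phi> x0", OF assms] abs_alpha_v_le[OF assms, of x0]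
      abs_Theta_le[OF assms, of x0] by (simp add: abs_le_iff)
  then have "norm (D\<phi> x0) powr m \<le> (M0 + k1 * osc + C2) / C1"
    using C1_pos by (simp add: field_simps)
  then have "(norm (D\<phi> x0) powr m) powr (1 / m) \<le> grad_bound osc"
    unfolding grad_bound_def using m_gt_1 by (intro powr_mono2) auto
  then show "norm (D\<phi> x0) \<le> grad_bound osc"
    using m_gt_1 by (simp add: powr_powr)
qed

lemma v_lipschitz:
  assumes "\<xi> \<in> I"
  shows "(grad_bound osc + 1)-lipschitz_on UNIV (\<lambda>x. v x \<xi>)"
proof -
  obtain B where "\<And>x \<xi>. \<xi> \<in> I \<Longrightarrow> \<bar>v x \<xi>\<bar> \<le> B"
    using v_bounded by blast
  with assms show ?thesis
    using v_continuous[OF assms] viscosity_gradient_le_v[OF assms]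
    by (intro lipschitz_on_if_test_gradients_bounded) (auto simp: grad_bound_def)
qed

lemma exists_small_deficit:
  obtains x0 where "x0 \<in> cbox 0 1" "(\<integral>\<eta>. vsup - v x0 \<eta> \<partial>measure_I) \<le> deficit_bound"
proof -
  obtain x \<xi> where "\<xi> \<in> I" and near: "vsup - 1 < v x \<xi>"
    using vsup_approx[OF zero_less_one] by blast
  obtain x0 where "x0 \<in> cbox 0 1" and max: "\<And>y. v y \<xi> \<le> v x0 \<xi>"
    using v_attains_max[OF \<open>\<xi> \<in> I\<close>] by blast
  have "k0 * (\<integral>\<eta>. vsup - v x0 \<eta> \<partial>measure_I) + - k1 \<le> Theta k I v x0 \<xi>"
  proof (rule Theta_ge_affine[OF \<open>\<xi> \<in> I\<close>])
    fix \<eta> assume "\<eta> \<in> I"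
    have "k0 * (vsup - v x0 \<eta>) - k1 \<le> k \<xi> \<eta> * ((vsup - v x0 \<eta>) - (vsup - v x0 \<xi>))"
      using near max[of x] v_le_vsup \<open>\<xi> \<in> I\<close> \<open>\<eta> \<in> I\<close> by (intro coupling_ge_affine) auto
    then show "k0 * (vsup - v x0 \<eta>) + - k1 \<le> k \<xi> \<eta> * (v x0 \<xi> - v x0 \<eta>)"
      by simp
  qed
  then have "k0 * (\<integral>\<eta>. vsup - v x0 \<eta> \<partial>measure_I) \<le> 2 * M0 + k1"
    using equation_le_at_max[OF \<open>\<xi> \<in> I\<close> max] abs_alpha_v_le[OF \<open>\<xi> \<in> I\<close>, of x0]
      H0_bound[OF \<open>\<xi> \<in> I\<close>, of x0] by (simp add: abs_le_iff)
  then have "(\<integral>\<eta>. vsup - v x0 \<eta> \<partial>measure_I) \<le> deficit_bound"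
    unfolding deficit_bound_def using k0_pos by (simp add: field_simps)
  with \<open>x0 \<in> cbox 0 1\<close> show thesis
    by (rule that)
qed

lemma v_diff_le_on_unit_cube:
  assumes "x0 \<in> cbox 0 1" "x1 \<in> cbox 0 1" "\<zeta> \<in> I"
  shows "v x0 \<zeta> - v x1 \<zeta> \<le> (grad_bound osc + 1) * real CARD('d)"
proof -
  have "dist (v x1 \<zeta>) (v x0 \<zeta>) \<le> (grad_bound osc + 1) * dist x1 x0"
    using lipschitz_onD[OF v_lipschitz[OF assms(3)]] by simp
  also have "\<dots> \<le> (grad_bound osc + 1) * real CARD('d)"
    using dist_le_card_unit_cube[OF assms(2,1)]
    unfolding grad_bound_def by (intro mult_left_mono) auto
  finally show ?thesis
    by (simp add: dist_real_def abs_le_iff)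
qed

lemma vsup_minus_v_le:
  assumes x0: "x0 \<in> cbox 0 1" "(\<integral>\<eta>. vsup - v x0 \<eta> \<partial>measure_I) \<le> deficit_bound"
    and "\<eta> \<in> I"
  shows "vsup - v x \<eta> \<le> osc_bound (real CARD('d)) (grad_bound osc + 1)"
proof -
  define L where "L = grad_bound osc + 1"
  define D where "D = real CARD('d)"
  obtain x1 where "x1 \<in> cbox 0 1" and min: "\<And>y. v x1 \<eta> \<le> v y \<eta>"
    using v_attains_min[OF \<open>\<eta> \<in> I\<close>] by blast
  define w where "w = vsup - v x1 \<eta>"
  have "0 \<le> L * D"
    unfolding L_def D_def grad_bound_def by simp
  have v_x1_ge: "v x0 \<zeta> - L * D \<le> v x1 \<zeta>" if "\<zeta> \<in> I" for \<zeta>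
    using v_diff_le_on_unit_cube[OF x0(1) \<open>x1 \<in> cbox 0 1\<close> that] by (simp add: L_def D_def)
  have "Theta k I v x1 \<eta> \<le> k1 * (\<integral>\<zeta>. vsup - v x0 \<zeta> \<partial>measure_I) + (k1 * (L * D) - k0 * w)"
  proof (rule Theta_le_affine[OF \<open>\<eta> \<in> I\<close>])
    fix \<zeta> assume "\<zeta> \<in> I"
    have "k \<eta> \<zeta> * (v x1 \<eta> - v x1 \<zeta>) \<le> k1 * ((vsup - v x0 \<zeta>) + L * D) - k0 * w"
      using v_x1_ge[OF \<open>\<zeta> \<in> I\<close>] v_le_vsup[OF \<open>\<eta> \<in> I\<close>, of x1] v_le_vsup[OF \<open>\<zeta> \<in> I\<close>, of x0]
        \<open>0 \<le> L * D\<close> \<open>\<eta> \<in> I\<close> \<open>\<zeta> \<in> I\<close>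
      by (intro coupling_le_affine) (auto simp: w_def)
    then show "k \<eta> \<zeta> * (v x1 \<eta> - v x1 \<zeta>) \<le> k1 * (vsup - v x0 \<zeta>) + (k1 * (L * D) - k0 * w)"
      by (simp add: distrib_left)
  qed
  moreover have "k1 * (\<integral>\<zeta>. vsup - v x0 \<zeta> \<partial>measure_I) \<le> k1 * deficit_bound"
    using x0(2) k1_pos by simp
  ultimately have "k0 * w \<le> 2 * M0 + k1 * deficit_bound + k1 * L * D"
    using equation_ge_at_min[OF \<open>\<eta> \<in> I\<close> min] abs_alpha_v_le[OF \<open>\<eta> \<in> I\<close>, of x1]
      H0_bound[OF \<open>\<eta> \<in> I\<close>, of x1] by (simp add: abs_le_iff)
  then have "w \<le> osc_bound D L"
    unfolding osc_bound_def using k0_pos by (simp add: field_simps)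
  then show ?thesis
    using min[of x] by (simp add: w_def L_def D_def)
qed

lemma osc_le: "osc \<le> osc_bound (real CARD('d)) (grad_bound osc + 1)"
proof -
  obtain x0 where "x0 \<in> cbox 0 1" "(\<integral>\<eta>. vsup - v x0 \<eta> \<partial>measure_I) \<le> deficit_bound"
    by (rule exists_small_deficit)
  then have "vsup - osc_bound (real CARD('d)) (grad_bound osc + 1) \<le> vinf"
    unfolding vinf_def using vsup_minus_v_le values_v_nonempty
    by (intro cInf_greatest) (auto simp: algebra_simps)
  then show ?thesis
    unfolding osc_def by simp
qed

end

theorem mainTheorem7:
  fixes H :: "real^'d \<Rightarrow> real^'d \<Rightarrow> real \<Rightarrow> real"
    and k :: "real \<Rightarrow> real \<Rightarrow> real"
    and I :: "real set"
    and k0 k1 C1 C2 m :: real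
  assumes I_interval: "is_interval I" and I_bounded: "bounded I"
    and I_length: "measure lborel I = 1"
    and k_meas: "set_borel_measurable lborel (I \<times> I) (\<lambda>(\<xi>, \<eta>). k \<xi> \<eta>)"
    and k0_pos: "0 < k0"
    and k_bounds: "\<And>\<xi> \<eta>. \<xi> \<in> I \<Longrightarrow> \<eta> \<in> I \<Longrightarrow> k0 \<le> k \<xi> \<eta> \<and> k \<xi> \<eta> \<le> k1"
    and H_cont: "\<And>\<xi>. \<xi> \<in> I \<Longrightarrow> continuous_on UNIV (\<lambda>(x, p). H x p \<xi>)"
    and H_per: "\<And>\<xi> p. \<xi> \<in> I \<Longrightarrow> periodic_Zd (\<lambda>x. H x p \<xi>)"
    and H_meas: "\<And>x p. set_borel_measurable lborel I (\<lambda>\<xi>. H x p \<xi>)"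
    and H_bdd: "\<And>p. \<exists>B. \<forall>x. \<forall>\<xi>\<in>I. \<bar>H x p \<xi>\<bar> \<le> B"
    and B1: "0 < C1" "0 < C2" "1 < m"
      "\<And>x p \<xi>. \<xi> \<in> I \<Longrightarrow> C1 * norm p powr m - C2 \<le> H x p \<xi>"
    and B2: "\<And>R. 0 < R \<Longrightarrow> \<exists>\<omega>::real \<Rightarrow> real. (\<omega> \<longlongrightarrow> 0) (at_right 0) \<and>
              (\<forall>x y p \<xi>. \<xi> \<in> I \<and> norm p \<le> R \<longrightarrow> \<bar>H x p \<xi> - H y p \<xi>\<bar> \<le> \<omega> (dist x y))"
  shows "\<exists>C>0. \<forall>\<alpha>>0. \<forall>v. DP_solution I k H \<alpha> v \<longrightarrow>
           (AE \<xi> in lborel. \<xi> \<in> I \<longrightarrow>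
              C-lipschitz_on UNIV (\<lambda>x. v x \<xi>) \<and> (\<forall>x. \<bar>Theta k I v x \<xi>\<bar> \<le> C))"
proof -
  obtain M0 where M0: "\<And>x \<xi>. \<xi> \<in> I \<Longrightarrow> \<bar>H x 0 \<xi>\<bar> \<le> M0"
    using H_bdd[of 0] by blast
  interpret dp_data I k H k0 k1 C1 C2 m M0
    using I_length set_borel_measurable_section[OF k_meas] k0_pos k_bounds M0 B1
    by unfold_locales auto
  obtain C where "0 < C" and C: "\<And>T. 0 \<le> T \<Longrightarrow> T \<le> osc_bound (real CARD('d)) (grad_bound T + 1) \<Longrightarrow>
      grad_bound T + 1 \<le> C \<and> k1 * T \<le> C"
    using uniform_bound by blast
  have "C-lipschitz_on UNIV (\<lambda>x. v x \<xi>) \<and> (\<forall>x. \<bar>Theta k I v x \<xi>\<bar> \<le> C)"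
    if "0 < \<alpha>" "DP_solution I k H \<alpha> v" "\<xi> \<in> I" for \<alpha> v \<xi>
  proof -
    interpret dp_solution I k H k0 k1 C1 C2 m M0 \<alpha> v
      using that(1,2) by unfold_locales
    have "grad_bound osc + 1 \<le> C" "k1 * osc \<le> C"
      using C[OF osc_nonneg osc_le] by auto
    then show ?thesis
      using lipschitz_on_le[OF v_lipschitz[OF \<open>\<xi> \<in> I\<close>]] abs_Theta_le[OF \<open>\<xi> \<in> I\<close>]
      by (meson order_trans)
  qed
  with \<open>0 < C\<close> show ?thesis
    by (blast intro: AE_I2)
qed

end
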